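(* Let $p$ be an odd prime, $q=p^m$, $q=et+1$ with integers $e\geq 2,t\geq 1$, $R_{e,q}=\mathbb{F}_q[u]/\langle u^e-1\rangle$ with orthogonal idempotents $\mu_1,\dots,\mu_e$ (see context). Let $\mathcal{C}=\bigoplus_{i=1}^e\mu_i\mathcal{C}_i$ be a cyclic code of length $n$ over $R_{e,q}$. Then $\mathcal{C}$ is an LCD code if and only if $\mathcal{C}_i$ is an LCD cyclic code of length $n$ over $\mathbb{F}_q$ for every $1\leq i\leq e$.
   Context: Write $u^e-1=\prod_{i=1}^e(u-\alpha_i)$ over $\mathbb{F}_q$, $G_i=u-\alpha_i$, $\widehat{G}_i=(u^e-1)/G_i$, $z_iG_i+h_i\widehat{G}_i=1$, $\mu_i=h_i\widehat{G}_i$; these are pairwise orthogonal idempotents summing to $1$. For a linear code $\mathcal{C}\subseteq R_{e,q}^n$, $\mathcal{C}_i=\{s_i\in\mathbb{F}_q^n:\exists\, s_j\ (j\neq i)\text{ with }\sum_{j}s_j\mu_j\in\mathcal{C}\}$ and $\mathcal{C}=\bigoplus_i\mu_i\mathcal{C}_i$. A linear code $\mathcal{C}$ is LCD (linear complementary dual) if $\mathcal{C}\cap\mathcal{C}^\perp=\{0\}$, the dual taken with respect to the Euclidean inner product. *)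

theory Defs
  imports "HOL-Computational_Algebra.Polynomial"
begin

definition fdot :: "nat \<Rightarrow> 'a::field list \<Rightarrow> 'a list \<Rightarrow> 'a" where
  "fdot n v w = (\<Sum>k<n. v ! k * w ! k)"

definition f_linear_code :: "nat \<Rightarrow> 'a::field list set \<Rightarrow> bool" where
  "f_linear_code n C \<longleftrightarrow>
     C \<subseteq> {v. length v = n} \<and> replicate n 0 \<in> C \<and>
     (\<forall>v\<in>C. \<forall>w\<in>C. map2 (+) v w \<in> C) \<and>
     (\<forall>c. \<forall>v\<in>C. map (\<lambda>x. c * x) v \<in> C)"

definition f_cyclic_code :: "nat \<Rightarrow> 'a::field list set \<Rightarrow> bool" where
  "f_cyclic_code n C \<longleftrightarrow> f_linear_code n C \<and> (\<forall>v\<in>C. rotate1 v \<in> C)"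

definition f_dual :: "nat \<Rightarrow> 'a::field list set \<Rightarrow> 'a list set" where
  "f_dual n C = {w. length w = n \<and> (\<forall>v\<in>C. fdot n v w = 0)}"

definition f_LCD :: "nat \<Rightarrow> 'a::field list set \<Rightarrow> bool" where
  "f_LCD n C \<longleftrightarrow> f_linear_code n C \<and> C \<inter> f_dual n C = {replicate n 0}"

section \<open>The ring R_{e,q} = F_q[u]/<u^e - 1>, elements = polynomials of degree < e\<close>

definition Pe :: "nat \<Rightarrow> 'a::field poly" where
  "Pe e = monom 1 e - 1"

definition Relem :: "nat \<Rightarrow> 'a::field poly \<Rightarrow> bool" where
  "Relem e f \<longleftrightarrow> degree f < e"

definition rmul :: "nat \<Rightarrow> 'a::field poly \<Rightarrow> 'a poly \<Rightarrow> 'a poly" where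
  "rmul e f g = (f * g) mod Pe e"

definition rdot :: "nat \<Rightarrow> nat \<Rightarrow> 'a::field poly list \<Rightarrow> 'a poly list \<Rightarrow> 'a poly" where
  "rdot e n v w = (\<Sum>k<n. v ! k * w ! k) mod Pe e"

definition r_linear_code :: "nat \<Rightarrow> nat \<Rightarrow> 'a::field poly list set \<Rightarrow> bool" where
  "r_linear_code e n C \<longleftrightarrow>
     C \<subseteq> {v. length v = n \<and> (\<forall>x\<in>set v. Relem e x)} \<and> replicate n 0 \<in> C \<and>
     (\<forall>v\<in>C. \<forall>w\<in>C. map2 (+) v w \<in> C) \<and>
     (\<forall>r. Relem e r \<longrightarrow> (\<forall>v\<in>C. map (rmul e r) v \<in> C))"

definition r_cyclic_code :: "nat \<Rightarrow> nat \<Rightarrow> 'a::field poly list set \<Rightarrow> bool" where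
  "r_cyclic_code e n C \<longleftrightarrow> r_linear_code e n C \<and> (\<forall>v\<in>C. rotate1 v \<in> C)"

definition r_dual :: "nat \<Rightarrow> nat \<Rightarrow> 'a::field poly list set \<Rightarrow> 'a poly list set" where
  "r_dual e n C = {w. length w = n \<and> (\<forall>x\<in>set w. Relem e x) \<and> (\<forall>v\<in>C. rdot e n v w = 0)}"

definition r_LCD :: "nat \<Rightarrow> nat \<Rightarrow> 'a::field poly list set \<Rightarrow> bool" where
  "r_LCD e n C \<longleftrightarrow> r_linear_code e n C \<and> C \<inter> r_dual e n C = {replicate n 0}"

text \<open>The index i in 1..e is replaced by the root alpha_i itself.\<close>

definition eroots :: "nat \<Rightarrow> 'a::field set" where
  "eroots e = {a. a ^ e = 1}"

definition Gi :: "'a::field \<Rightarrow> 'a poly" where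
  "Gi a = [:-a, 1:]"

definition Ghat :: "nat \<Rightarrow> 'a::field \<Rightarrow> 'a poly" where
  "Ghat e a = Pe e div Gi a"

definition mu :: "nat \<Rightarrow> 'a::field \<Rightarrow> 'a poly" where
  "mu e a = ((SOME h. \<exists>z. z * Gi a + h * Ghat e a = 1) * Ghat e a) mod Pe e"

definition comp_code :: "nat \<Rightarrow> nat \<Rightarrow> 'a::field poly list set \<Rightarrow> 'a \<Rightarrow> 'a list set" where
  "comp_code e n C a = {s. length s = n \<and>
     (\<exists>S. S a = s \<and> (\<forall>b\<in>eroots e. length (S b) = n) \<and>
          map (\<lambda>k. \<Sum>b\<in>eroots e. smult (S b ! k) (mu e b)) [0..<n] \<in> C)}"

end

theory Submission
  imports Defs
begin

(*
  Since e divides q - 1, the polynomial u^e - 1 has exactly e distinct roots in F_q, so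
  evaluation at these roots is the Chinese-remainder isomorphism R_{e,q} = F_q^e, under which
  mu_a becomes the a-th unit vector. Hence the component code C_a is simply the image of C
  under evaluation at a, and a vector w over R_{e,q} is orthogonal to C iff each evaluation
  of w is orthogonal to the corresponding component code. Consequently C intersected with its
  dual vanishes iff every C_a intersected with its dual vanishes: for the nontrivial direction,
  a vector s in C_a and its dual lifts to mu_a v in C, which is orthogonal to C.
*)

lemma finite_field_power_card_minus_1:
  fixes x :: "'a::{field,finite}"
  assumes "x \<noteq> 0"
  shows "x ^ (card (UNIV :: 'a set) - 1) = 1"
proof -
  let ?N = "UNIV - {0::'a}"
  have "x ^ card ?N * \<Prod>?N = (\<Prod>y\<in>?N. x * y)"
    by (simp add: prod.distrib)
  also have "\<dots> = \<Prod>?N"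
    by (rule prod.reindex_bij_witness[of _ "\<lambda>y. y / x" "\<lambda>y. x * y"]) (use assms in auto)
  finally have "x ^ card ?N = 1"
    by simp
  then show ?thesis
    by (simp add: card_Diff_singleton)
qed

lemma card_power_fiber_le:
  fixes x\<^sub>0 :: "'a::{field,finite}"
  assumes "x\<^sub>0 \<noteq> 0"
  shows "card {x. x ^ e = x\<^sub>0 ^ e} \<le> card (eroots e :: 'a set)"
proof -
  have "{x. x ^ e = x\<^sub>0 ^ e} \<subseteq> (\<lambda>z. x\<^sub>0 * z) ` eroots e"
  proof
    fix x assume "x \<in> {x. x ^ e = x\<^sub>0 ^ e}"
    then have "(x / x\<^sub>0) ^ e = 1"
      using assms by (simp add: power_divide)
    moreover have "x = x\<^sub>0 * (x / x\<^sub>0)"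
      using assms by simp
    ultimately show "x \<in> (\<lambda>z. x\<^sub>0 * z) ` eroots e"
      unfolding eroots_def by blast
  qed
  then have "card {x. x ^ e = x\<^sub>0 ^ e} \<le> card ((\<lambda>z. x\<^sub>0 * z) ` eroots e)"
    by (intro card_mono) auto
  also have "\<dots> \<le> card (eroots e :: 'a set)"
    by (rule card_image_le) auto
  finally show ?thesis .
qed

lemma poly_Pe [simp]: "poly (Pe e) c = c ^ e - 1"
  by (simp add: Pe_def poly_monom)

lemma degree_Pe: "e > 0 \<Longrightarrow> degree (Pe e :: 'a::field poly) = e"
  unfolding Pe_def by (subst diff_conv_add_uminus, subst degree_add_eq_left) (auto simp: degree_monom_eq)

lemma Pe_nonzero: "e > 0 \<Longrightarrow> Pe e \<noteq> (0 :: 'a::field poly)"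
  using degree_Pe[of e] by (metis degree_0 less_irrefl)

lemma eroots_eq_roots_Pe: "eroots e = {c. poly (Pe e) c = 0}"
  by (simp add: eroots_def)

lemma card_eroots_le:
  assumes "e > 0"
  shows "card (eroots e :: 'a::field set) \<le> e"
proof -
  have "card {c. poly (Pe e :: 'a poly) c = 0} \<le> degree (Pe e :: 'a poly)"
    by (rule card_poly_roots_bound) (rule Pe_nonzero[OF assms])
  then show ?thesis
    by (simp only: eroots_eq_roots_Pe degree_Pe[OF assms])
qed

text \<open>The map \<open>x \<mapsto> x ^ e\<close> sends the \<open>e t\<close> nonzero elements into the at most \<open>t\<close> roots of
  \<open>u ^ t - 1\<close>, and each of its fibres is a coset of \<open>eroots e\<close>.\<close>

lemma card_eroots:
  assumes "e > 0" and "e dvd card (UNIV :: 'a::{field,finite} set) - 1"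
  shows "card (eroots e :: 'a set) = e"
proof -
  obtain t where t: "card (UNIV :: 'a set) - 1 = e * t"
    using assms(2) by blast
  have "card {0, 1 :: 'a} \<le> card (UNIV :: 'a set)"
    by (rule card_mono) auto
  then have "t > 0"
    using t by (cases t) auto
  let ?N = "UNIV - {0::'a}"
  let ?Y = "(\<lambda>x. x ^ e) ` ?N"
  have "?Y \<subseteq> eroots t"
  proof
    fix y assume "y \<in> ?Y"
    then obtain x where "x \<noteq> 0" and "y = x ^ e"
      by blast
    then have "y ^ t = x ^ (e * t)"
      by (simp add: power_mult)
    also have "\<dots> = 1"
      using finite_field_power_card_minus_1[OF \<open>x \<noteq> 0\<close>] unfolding t .
    finally show "y \<in> eroots t"
      by (simp add: eroots_def)
  qed
  then have "card ?Y \<le> card (eroots t :: 'a set)"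
    by (rule card_mono[rotated]) simp
  also have "\<dots> \<le> t"
    by (rule card_eroots_le) fact
  finally have "card ?Y \<le> t" .
  have "e * t = card ?N"
    by (simp add: card_Diff_singleton t[symmetric])
  also have "\<dots> \<le> card (\<Union>y\<in>?Y. {x. x ^ e = y})"
    by (intro card_mono) auto
  also have "\<dots> \<le> (\<Sum>y\<in>?Y. card {x. x ^ e = y})"
    by (rule card_UN_le) auto
  also have "\<dots> \<le> (\<Sum>y\<in>?Y. card (eroots e :: 'a set))"
    by (rule sum_mono) (auto intro: card_power_fiber_le)
  also have "\<dots> \<le> t * card (eroots e :: 'a set)"
    using \<open>card ?Y \<le> t\<close> by simp
  finally have "e \<le> card (eroots e :: 'a set)"
    using \<open>t > 0\<close> by (simp add: mult.commute)
  moreover have "card (eroots e :: 'a set) \<le> e"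
    by (rule card_eroots_le) fact
  ultimately show ?thesis
    by simp
qed

lemma poly_mod_Pe:
  assumes "c \<in> eroots e"
  shows "poly (f mod Pe e) c = poly f c"
proof -
  have "poly (Pe e) c = 0"
    using assms by (simp add: eroots_def)
  then show ?thesis
    by (metis div_mult_mod_eq poly_add poly_mult mult_zero_right add_0)
qed

lemma Relem_mod_Pe:
  fixes f :: "'a::field poly"
  assumes "e > 0"
  shows "Relem e (f mod Pe e)"
  using degree_mod_less'[OF Pe_nonzero[OF assms], of f] degree_Pe[OF assms, where 'a='a] assms
  unfolding Relem_def by (cases "f mod Pe e = 0") auto

lemma Gi_mult_Ghat:
  assumes "a \<in> eroots e"
  shows "Gi a * Ghat e a = Pe e"
proof -
  have "Gi a dvd Pe e"
    using assms by (simp add: Gi_def eroots_def poly_eq_0_iff_dvd[symmetric])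
  then show ?thesis
    unfolding Ghat_def by (rule dvd_mult_div_cancel)
qed

lemma poly_Ghat_eq_0:
  assumes "a \<in> eroots e" and "b \<in> eroots e" and "b \<noteq> a"
  shows "poly (Ghat e a) b = 0"
proof -
  have "poly (Pe e) b = 0"
    using assms(2) by (simp add: eroots_def)
  then have "poly (Gi a * Ghat e a) b = 0"
    by (simp only: Gi_mult_Ghat[OF assms(1)])
  then show ?thesis
    using assms(3) by (simp add: Gi_def)
qed

lemma linear_factor_bezout:
  assumes "poly g a \<noteq> 0"
  shows "\<exists>h z. z * Gi a + h * g = 1"
proof -
  define h where "h = [:1 / poly g a:]"
  have "poly (1 - h * g) a = 0"
    using assms by (simp add: h_def)
  then have "Gi a dvd 1 - h * g"
    unfolding Gi_def by (simp only: poly_eq_0_iff_dvd)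
  then have "(1 - h * g) div Gi a * Gi a + h * g = 1"
    by simp
  then show ?thesis
    by blast
qed

text \<open>Evaluation at a root \<open>c\<close> is the projection of \<open>R\<^sub>e\<^sub>,\<^sub>q\<close> onto its \<open>\<mu>\<^sub>c\<close>-component.\<close>

definition vec_eval :: "'a::field \<Rightarrow> 'a poly list \<Rightarrow> 'a list" where
  "vec_eval c v = map (\<lambda>f. poly f c) v"

definition mu_comb :: "nat \<Rightarrow> nat \<Rightarrow> ('a::field \<Rightarrow> 'a list) \<Rightarrow> 'a poly list" where
  "mu_comb e n S = map (\<lambda>k. \<Sum>b\<in>eroots e. smult (S b ! k) (mu e b)) [0..<n]"

lemma length_mu_comb [simp]: "length (mu_comb e n S) = n"
  by (simp add: mu_comb_def)

lemma length_vec_eval [simp]: "length (vec_eval c v) = length v"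
  by (simp add: vec_eval_def)

lemma nth_vec_eval [simp]: "k < length v \<Longrightarrow> vec_eval c v ! k = poly (v ! k) c"
  by (simp add: vec_eval_def)

lemma vec_eval_replicate_0 [simp]: "vec_eval c (replicate n 0) = replicate n 0"
  by (simp add: vec_eval_def)

lemma vec_eval_add:
  "length v = length w \<Longrightarrow> vec_eval c (map2 (+) v w) = map2 (+) (vec_eval c v) (vec_eval c w)"
  by (rule nth_equalityI) auto

lemma vec_eval_rmul:
  "c \<in> eroots e \<Longrightarrow> vec_eval c (map (rmul e r) v) = map (\<lambda>x. poly r c * x) (vec_eval c v)"
  by (simp add: vec_eval_def rmul_def poly_mod_Pe)

lemma vec_eval_rotate1: "vec_eval c (rotate1 v) = rotate1 (vec_eval c v)"
  by (simp add: vec_eval_def rotate1_map)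

lemma fdot_replicate_0 [simp]: "fdot n v (replicate n 0) = 0"
  by (simp add: fdot_def)

lemma replicate_0_in_f_dual [simp]: "replicate n 0 \<in> f_dual n C"
  by (simp add: f_dual_def)

lemma r_linear_code_subset:
  "r_linear_code e n C \<Longrightarrow> C \<subseteq> {v. length v = n \<and> (\<forall>x\<in>set v. Relem e x)}"
  by (simp add: r_linear_code_def)

lemma r_linear_code_replicate_0: "r_linear_code e n C \<Longrightarrow> replicate n 0 \<in> C"
  by (simp add: r_linear_code_def)

lemma r_linear_code_add: "r_linear_code e n C \<Longrightarrow> v \<in> C \<Longrightarrow> w \<in> C \<Longrightarrow> map2 (+) v w \<in> C"
  by (simp add: r_linear_code_def)

lemma r_linear_code_rmul:
  "r_linear_code e n C \<Longrightarrow> Relem e r \<Longrightarrow> v \<in> C \<Longrightarrow> map (rmul e r) v \<in> C"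
  by (simp add: r_linear_code_def)

lemma poly_rdot:
  assumes "c \<in> eroots e" and "length v = n" and "length w = n"
  shows "poly (rdot e n v w) c = fdot n (vec_eval c v) (vec_eval c w)"
  using assms by (simp add: rdot_def poly_mod_Pe fdot_def poly_sum)

context
  fixes e :: nat
  assumes e_pos: "e > 0"
    and card_eroots_eq: "card (eroots e :: 'a::field set) = e"
begin

lemma finite_eroots: "finite (eroots e :: 'a set)"
  using e_pos card_eroots_eq by (metis card.infinite less_irrefl)

lemma Relem_eqI:
  fixes f g :: "'a poly"
  assumes "Relem e f" and "Relem e g" and "\<And>c. c \<in> eroots e \<Longrightarrow> poly f c = poly g c"
  shows "f = g"
  using assms card_eroots_eq by (intro poly_eqI_degree[of "eroots e"]) (auto simp: Relem_def)

lemma poly_Ghat_self_nonzero: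
  fixes a :: 'a
  assumes "a \<in> eroots e"
  shows "poly (Ghat e a) a \<noteq> 0"
proof
  assume "poly (Ghat e a) a = 0"
  have "Ghat e a \<noteq> 0"
    using Gi_mult_Ghat[OF assms] Pe_nonzero[OF e_pos] by auto
  then have "degree (Gi a * Ghat e a) = degree (Gi a) + degree (Ghat e a)"
    by (intro degree_mult_eq) (auto simp: Gi_def)
  then have "degree (Pe e :: 'a poly) = 1 + degree (Ghat e a)"
    unfolding Gi_mult_Ghat[OF assms] by (simp add: Gi_def)
  then have "Relem e (Ghat e a)"
    using degree_Pe[OF e_pos, where 'a='a] by (simp add: Relem_def)
  moreover have "poly (Ghat e a) c = poly 0 c" if "c \<in> eroots e" for c
    using poly_Ghat_eq_0[OF assms that] \<open>poly (Ghat e a) a = 0\<close> by (cases "c = a") auto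
  ultimately have "Ghat e a = 0"
    using e_pos by (intro Relem_eqI) (auto simp: Relem_def)
  with \<open>Ghat e a \<noteq> 0\<close> show False ..
qed

lemma Relem_mu: "Relem e (mu e a :: 'a poly)"
  unfolding mu_def by (rule Relem_mod_Pe[OF e_pos])

lemma poly_mu:
  fixes a b :: 'a
  assumes "a \<in> eroots e" and "b \<in> eroots e"
  shows "poly (mu e a) b = (if b = a then 1 else 0)"
proof -
  define h where "h = (SOME h. \<exists>z. z * Gi a + h * Ghat e a = 1)"
  obtain z where z: "z * Gi a + h * Ghat e a = 1"
    using someI_ex[OF linear_factor_bezout[OF poly_Ghat_self_nonzero[OF assms(1)]]]
    unfolding h_def by blast
  have "poly (mu e a) b = poly (h * Ghat e a) b"
    unfolding mu_def h_def[symmetric] using assms(2) by (rule poly_mod_Pe)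
  also have "\<dots> = (if b = a then 1 else 0)"
  proof (cases "b = a")
    case True
    have "poly (z * Gi a + h * Ghat e a) a = 1"
      using z by simp
    with True show ?thesis
      by (simp add: Gi_def)
  next
    case False
    with poly_Ghat_eq_0[OF assms(1,2)] show ?thesis
      by simp
  qed
  finally show ?thesis .
qed

lemma Relem_0: "Relem e (0 :: 'a poly)"
  using e_pos by (simp add: Relem_def)

lemma rdot_eq_0_iff:
  fixes v w :: "'a poly list"
  assumes "length v = n" and "length w = n"
  shows "rdot e n v w = 0 \<longleftrightarrow> (\<forall>c\<in>eroots e. fdot n (vec_eval c v) (vec_eval c w) = 0)"
proof
  assume "rdot e n v w = 0"
  then show "\<forall>c\<in>eroots e. fdot n (vec_eval c v) (vec_eval c w) = 0"
    using poly_rdot[OF _ assms] by (metis poly_0)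
next
  assume "\<forall>c\<in>eroots e. fdot n (vec_eval c v) (vec_eval c w) = 0"
  then show "rdot e n v w = 0"
    using poly_rdot[OF _ assms] Relem_mod_Pe[OF e_pos] Relem_0
    by (intro Relem_eqI) (auto simp: rdot_def)
qed

lemma vec_eqI_vec_eval:
  fixes v w :: "'a poly list"
  assumes "length v = length w" and "\<forall>x\<in>set v. Relem e x" and "\<forall>x\<in>set w. Relem e x"
    and "\<And>c. c \<in> eroots e \<Longrightarrow> vec_eval c v = vec_eval c w"
  shows "v = w"
proof (rule nth_equalityI)
  fix k assume "k < length v"
  then have "poly (v ! k) c = poly (w ! k) c" if "c \<in> eroots e" for c
    using assms(1) assms(4)[OF that] by (metis nth_vec_eval)
  with \<open>k < length v\<close> assms(1-3) show "v ! k = w ! k"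
    by (intro Relem_eqI) auto
qed (fact assms(1))

lemma vec_eval_mu_comb:
  fixes a :: 'a
  assumes "a \<in> eroots e" and "length (S a) = n"
  shows "vec_eval a (mu_comb e n S) = S a"
proof (rule nth_equalityI)
  show "length (vec_eval a (mu_comb e n S)) = length (S a)"
    using assms(2) by (simp add: mu_comb_def)
  fix k assume "k < length (vec_eval a (mu_comb e n S))"
  then have "vec_eval a (mu_comb e n S) ! k = (\<Sum>b\<in>eroots e. S b ! k * poly (mu e b) a)"
    by (simp add: mu_comb_def poly_sum)
  also have "\<dots> = (\<Sum>b\<in>eroots e. if b = a then S a ! k else 0)"
    using assms(1) by (intro sum.cong) (auto simp: poly_mu)
  also have "\<dots> = S a ! k"
    using assms(1) finite_eroots by simp
  finally show "vec_eval a (mu_comb e n S) ! k = S a ! k" .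
qed

lemma Relem_mu_comb: "\<forall>x\<in>set (mu_comb e n S). Relem e (x :: 'a poly)"
  using Relem_mu e_pos unfolding mu_comb_def Relem_def
  by (auto intro!: degree_sum_less le_less_trans[OF degree_smult_le])

lemma mu_comb_vec_eval:
  fixes v :: "'a poly list"
  assumes "length v = n" and "\<forall>x\<in>set v. Relem e x"
  shows "mu_comb e n (\<lambda>b. vec_eval b v) = v"
  using assms by (intro vec_eqI_vec_eval) (auto simp: Relem_mu_comb vec_eval_mu_comb)

lemma comp_code_eq_image:
  fixes a :: 'a
  assumes C: "C \<subseteq> {v. length v = n \<and> (\<forall>x\<in>set v. Relem e x)}" and a: "a \<in> eroots e"
  shows "comp_code e n C a = vec_eval a ` C"
proof (intro equalityI subsetI)
  fix s assume "s \<in> comp_code e n C a"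
  then obtain S where "S a = s" and "length s = n" and "mu_comb e n S \<in> C"
    unfolding comp_code_def mu_comb_def by blast
  with vec_eval_mu_comb[OF a] show "s \<in> vec_eval a ` C"
    by (metis image_eqI)
next
  fix s assume "s \<in> vec_eval a ` C"
  then obtain v where "v \<in> C" and "s = vec_eval a v"
    by blast
  moreover from \<open>v \<in> C\<close> C have "mu_comb e n (\<lambda>b. vec_eval b v) \<in> C"
    using mu_comb_vec_eval by auto
  ultimately show "s \<in> comp_code e n C a"
    using C unfolding comp_code_def mu_comb_def[symmetric]
    by (auto intro!: exI[of _ "\<lambda>b. vec_eval b v"])
qed

lemma f_linear_code_vec_eval_image:
  fixes c :: 'a
  assumes lin: "r_linear_code e n C" and c: "c \<in> eroots e"
  shows "f_linear_code n (vec_eval c ` C)"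
proof -
  have "vec_eval c ` C \<subseteq> {v. length v = n}"
    using r_linear_code_subset[OF lin] by auto
  moreover have "replicate n 0 \<in> vec_eval c ` C"
    using r_linear_code_replicate_0[OF lin] by (metis vec_eval_replicate_0 image_eqI)
  moreover have "map2 (+) (vec_eval c v) (vec_eval c w) \<in> vec_eval c ` C"
    if "v \<in> C" and "w \<in> C" for v w
  proof -
    have "map2 (+) v w \<in> C"
      using lin that by (rule r_linear_code_add)
    moreover have "length v = length w"
      using r_linear_code_subset[OF lin] that by auto
    ultimately show ?thesis
      by (metis vec_eval_add image_eqI)
  qed
  moreover have "map (\<lambda>x. k * x) (vec_eval c v) \<in> vec_eval c ` C" if "v \<in> C" for k v
  proof -
    have "Relem e [:k:]"
      using e_pos by (simp add: Relem_def)
    with lin have "map (rmul e [:k:]) v \<in> C"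
      using that by (rule r_linear_code_rmul)
    moreover have "vec_eval c (map (rmul e [:k:]) v) = map (\<lambda>x. k * x) (vec_eval c v)"
      using vec_eval_rmul[OF c, of "[:k:]"] by simp
    ultimately show ?thesis
      by (metis image_eqI)
  qed
  ultimately show ?thesis
    unfolding f_linear_code_def by blast
qed

lemma f_cyclic_code_vec_eval_image:
  fixes c :: 'a
  assumes cyc: "r_cyclic_code e n C" and c: "c \<in> eroots e"
  shows "f_cyclic_code n (vec_eval c ` C)"
proof -
  have "rotate1 (vec_eval c v) \<in> vec_eval c ` C" if "v \<in> C" for v
    using cyc that unfolding r_cyclic_code_def by (metis vec_eval_rotate1 image_eqI)
  with cyc show ?thesis
    unfolding f_cyclic_code_def r_cyclic_code_def by (auto intro: f_linear_code_vec_eval_image[OF _ c])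
qed

lemma r_dual_iff_vec_eval:
  fixes C :: "'a poly list set"
  assumes "C \<subseteq> {v. length v = n}"
  shows "w \<in> r_dual e n C \<longleftrightarrow> length w = n \<and> (\<forall>x\<in>set w. Relem e x) \<and>
           (\<forall>c\<in>eroots e. vec_eval c w \<in> f_dual n (vec_eval c ` C))"
proof -
  have "rdot e n v w = 0 \<longleftrightarrow> (\<forall>c\<in>eroots e. fdot n (vec_eval c v) (vec_eval c w) = 0)"
    if "v \<in> C" and "length w = n" for v
    using assms that by (intro rdot_eq_0_iff) auto
  then show ?thesis
    by (auto simp: r_dual_def f_dual_def)
qed

lemma vec_eval_mu_scale:
  fixes a c :: 'a
  assumes "a \<in> eroots e" and "c \<in> eroots e"
  shows "vec_eval c (map (rmul e (mu e a)) v) =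
           (if c = a then vec_eval a v else replicate (length v) 0)"
  using assms by (simp add: vec_eval_rmul poly_mu) (simp add: vec_eval_def map_replicate_const)

lemma f_LCD_vec_eval_image:
  fixes a :: 'a
  assumes LCD: "r_LCD e n C" and a: "a \<in> eroots e"
  shows "f_LCD n (vec_eval a ` C)"
proof -
  have lin: "r_linear_code e n C" and C_dual: "C \<inter> r_dual e n C = {replicate n 0}"
    using LCD by (simp_all add: r_LCD_def)
  have C_sub: "C \<subseteq> {v. length v = n}"
    using r_linear_code_subset[OF lin] by auto
  have "s = replicate n 0" if s: "s \<in> vec_eval a ` C \<inter> f_dual n (vec_eval a ` C)" for s
  proof -
    obtain v where "v \<in> C" and s_def: "s = vec_eval a v"
      using s by blast
    define w where "w = map (rmul e (mu e a)) v"
    \<comment> \<open>\<open>w = \<mu>\<^sub>a v\<close> lies in \<open>C\<close>; its component at \<open>a\<close> is \<open>s\<close> and all others vanish, so \<open>w \<in> C\<^sup>\<perp>\<close>.\<close>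
    have "w \<in> C"
      unfolding w_def using lin Relem_mu \<open>v \<in> C\<close> by (rule r_linear_code_rmul)
    have "length v = n"
      using C_sub \<open>v \<in> C\<close> by auto
    then have eval_w: "vec_eval c w = (if c = a then s else replicate n 0)" if "c \<in> eroots e" for c
      using vec_eval_mu_scale[OF a that] by (simp add: w_def s_def)
    have "w \<in> r_dual e n C"
      unfolding r_dual_iff_vec_eval[OF C_sub]
    proof (intro conjI ballI)
      show "length w = n"
        using \<open>length v = n\<close> by (simp add: w_def)
      show "Relem e x" if "x \<in> set w" for x
        using that Relem_mod_Pe[OF e_pos] by (auto simp: w_def rmul_def)
      show "vec_eval c w \<in> f_dual n (vec_eval c ` C)" if "c \<in> eroots e" for c
        using s eval_w[OF that] by (cases "c = a") auto
    qed
    with \<open>w \<in> C\<close> C_dual have "w = replicate n 0"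
      by blast
    with eval_w[OF a] show "s = replicate n 0"
      by simp
  qed
  moreover have "replicate n 0 \<in> vec_eval a ` C"
    using r_linear_code_replicate_0[OF lin] by (metis vec_eval_replicate_0 image_eqI)
  moreover have "replicate n 0 \<in> f_dual n (vec_eval a ` C)"
    by simp
  ultimately have "vec_eval a ` C \<inter> f_dual n (vec_eval a ` C) = {replicate n 0}"
    by blast
  with f_linear_code_vec_eval_image[OF lin a] show ?thesis
    unfolding f_LCD_def ..
qed

lemma r_LCD_if_vec_eval_images_LCD:
  fixes C :: "'a poly list set"
  assumes lin: "r_linear_code e n C" and LCD: "\<forall>c\<in>eroots e. f_LCD n (vec_eval c ` C)"
  shows "r_LCD e n C"
proof -
  have C_sub: "C \<subseteq> {v. length v = n}"
    using r_linear_code_subset[OF lin] by auto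
  have "w = replicate n 0" if w: "w \<in> C \<inter> r_dual e n C" for w
  proof -
    have "w \<in> r_dual e n C"
      using w by blast
    then have "length w = n" and "\<forall>x\<in>set w. Relem e x"
      and w_dual: "\<forall>c\<in>eroots e. vec_eval c w \<in> f_dual n (vec_eval c ` C)"
      unfolding r_dual_iff_vec_eval[OF C_sub] by auto
    have "vec_eval c w = vec_eval c (replicate n 0)" if c: "c \<in> eroots e" for c
    proof -
      have "vec_eval c w \<in> vec_eval c ` C \<inter> f_dual n (vec_eval c ` C)"
        using w w_dual c by blast
      with LCD c show ?thesis
        by (simp add: f_LCD_def)
    qed
    with \<open>length w = n\<close> \<open>\<forall>x\<in>set w. Relem e x\<close> show ?thesis
      using Relem_0 by (intro vec_eqI_vec_eval) auto
  qed
  moreover have "replicate n 0 \<in> r_dual e n C"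
    using Relem_0 unfolding r_dual_iff_vec_eval[OF C_sub] by auto
  moreover note r_linear_code_replicate_0[OF lin]
  ultimately show ?thesis
    using lin unfolding r_LCD_def by blast
qed

lemma r_LCD_iff_vec_eval_images_LCD:
  fixes C :: "'a poly list set"
  assumes "r_linear_code e n C"
  shows "r_LCD e n C \<longleftrightarrow> (\<forall>c\<in>eroots e. f_LCD n (vec_eval c ` C))"
  using assms f_LCD_vec_eval_image r_LCD_if_vec_eval_images_LCD by blast

end

theorem theorem4p3:
  fixes C :: "'a::{field,finite} poly list set"
    and p m q e t n :: nat
  assumes "prime p" and "odd p" and "q = p ^ m" and "card (UNIV :: 'a set) = q"
    and "q = e * t + 1" and "e \<ge> 2" and "t \<ge> 1"
    and "r_cyclic_code e n C"
  shows "r_LCD e n C \<longleftrightarrow>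
           (\<forall>a\<in>eroots e. f_cyclic_code n (comp_code e n C a) \<and> f_LCD n (comp_code e n C a))"
proof -
  have e_pos: "e > 0"
    using \<open>e \<ge> 2\<close> by simp
  have card: "card (eroots e :: 'a set) = e"
    using assms(4,5) by (intro card_eroots[OF e_pos]) simp
  have lin: "r_linear_code e n C"
    using \<open>r_cyclic_code e n C\<close> by (simp add: r_cyclic_code_def)
  have "comp_code e n C a = vec_eval a ` C" if "a \<in> eroots e" for a
    using comp_code_eq_image[OF e_pos card r_linear_code_subset[OF lin] that] .
  with r_LCD_iff_vec_eval_images_LCD[OF e_pos card lin]
    f_cyclic_code_vec_eval_image[OF e_pos card \<open>r_cyclic_code e n C\<close>]
  show ?thesis
    by simp
qed

end
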